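(* Let $n\geq 3$ and $k\geq 2$ be integers and let $LCG(n,k)$ be the layer cycle graph with parameters $n,k$. Then the metric dimension of $LCG(n,k)$ is $\beta(LCG(n,k))=n(n-1)^{k-2}$.
   Context: All graphs are simple and connected; $d(u,v)$ is the shortest-path distance. For an ordered set $R=\{r_1,\dots,r_m\}$ of vertices, $r(u\,|\,R)=(d(u,r_1),\dots,d(u,r_m))$. $R$ is a resolving set of $G$ if distinct vertices of $G$ have distinct representations $r(\cdot|R)$; the metric dimension $\beta(G)$ is the minimum size of a resolving set. The layer cycle graph $LCG(n,k)$ ($n\geq 3$, $k\geq 2$) is constructed as follows. Its vertex set is partitioned into layers $U_1,\dots,U_k$. Layer $U_1$ is a cycle $C_n$ on vertices $1,\dots,n$. For $2\leq p\leq k$, layer $U_p$ consists of $n(n-1)^{p-2}$ vertex-disjoint cycles of length $n$, each with a distinguished vertex called its head vertex. Each vertex of $U_1$ is joined by an edge to the head vertex of exactly one cycle of $U_2$ (distinct vertices to distinct cycles). For $2\leq p<k$, each of the $n-1$ non-head vertices of each cycle of $U_p$ is joined by an edge to the head vertex of exactly one cycle of $U_{p+1}$, in such a way that every cycle of $U_{p+1}$ has its head joined to exactly one such vertex. There are no other edges. Thus $LCG(n,k)$ has $n+\sum_{p=2}^{k}n^2(n-1)^{p-2}$ vertices. *)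

theory Defs
  imports Main
begin

definition walk_of_len :: "'a set \<Rightarrow> ('a \<Rightarrow> 'a \<Rightarrow> bool) \<Rightarrow> 'a \<Rightarrow> 'a \<Rightarrow> nat \<Rightarrow> bool" where
  "walk_of_len V E u v m \<longleftrightarrow>
     (\<exists>ps. length ps = Suc m \<and> hd ps = u \<and> last ps = v \<and> set ps \<subseteq> V \<and>
           (\<forall>i < m. E (ps ! i) (ps ! Suc i)))"

definition gdist :: "'a set \<Rightarrow> ('a \<Rightarrow> 'a \<Rightarrow> bool) \<Rightarrow> 'a \<Rightarrow> 'a \<Rightarrow> nat" where
  "gdist V E u v = (LEAST m. walk_of_len V E u v m)"

definition resolving :: "'a set \<Rightarrow> ('a \<Rightarrow> 'a \<Rightarrow> bool) \<Rightarrow> 'a set \<Rightarrow> bool" where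
  "resolving V E R \<longleftrightarrow> R \<subseteq> V \<and>
     (\<forall>u\<in>V. \<forall>v\<in>V. (\<forall>r\<in>R. gdist V E u r = gdist V E v r) \<longrightarrow> u = v)"

definition metric_dim :: "'a set \<Rightarrow> ('a \<Rightarrow> 'a \<Rightarrow> bool) \<Rightarrow> nat" where
  "metric_dim V E = (LEAST m. \<exists>R. finite R \<and> resolving V E R \<and> card R = m)"

text \<open>Vertex (xs, i): xs = [] encodes layer U_1, i < n the position on the cycle C_n.
  For layer p \<ge> 2, xs has length p-1 and encodes the cycle: xs = [a] is the cycle of U_2
  attached to vertex a of U_1; xs @ [j] (j a non-head position 1..n-1) is the cycle of
  U_(p+1) attached to vertex j of cycle xs. Position 0 is the head vertex.\<close>

definition lcg_V :: "nat \<Rightarrow> nat \<Rightarrow> (nat list \<times> nat) set" where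
  "lcg_V n k = {(xs, i). i < n \<and> length xs \<le> k - 1 \<and> (\<forall>a \<in> set xs. a < n)
                         \<and> (\<forall>a \<in> set (tl xs). a \<noteq> 0)}"

definition lcg_adj0 :: "nat \<Rightarrow> nat list \<times> nat \<Rightarrow> nat list \<times> nat \<Rightarrow> bool" where
  "lcg_adj0 n x y \<longleftrightarrow>
     (fst x = fst y \<and> snd y = (snd x + 1) mod n) \<or>
     (fst y = fst x @ [snd x] \<and> snd y = 0 \<and> (fst x = [] \<or> snd x \<noteq> 0))"

definition lcg_E :: "nat \<Rightarrow> nat \<Rightarrow> nat list \<times> nat \<Rightarrow> nat list \<times> nat \<Rightarrow> bool" where
  "lcg_E n k x y \<longleftrightarrow> x \<in> lcg_V n k \<and> y \<in> lcg_V n k \<and> (lcg_adj0 n x y \<or> lcg_adj0 n y x)"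

end

theory Submission
  imports Defs "HOL-Library.Sublist"
begin

text \<open>A metric basis is formed by one neighbour of the head in each of the \<open>n(n-1)^(k-2)\<close>
  cycles of the last layer. Every cycle of a layer \<open>p \<ge> 2\<close>, together with everything hanging
  below it, is attached to the rest of the graph by a single bridge, so two vertices on different
  sides of that bridge are resolved as soon as there is a landmark on each side. Vertices of one
  cycle are resolved by a landmark below one of them, by a landmark outside (which measures the
  distance to the head), or, on a last-layer cycle, by the distances to the head and to the
  landmark next to it. Conversely, if a last-layer cycle carried no landmark off its head, the
  reflection of that cycle in its head would be an isometry fixing every landmark and swapping
  the two neighbours of the head; so a resolving set has a vertex on each of these cycles.\<close>

section \<open>Distances on a cycle\<close>

definition cycle_dist :: "nat \<Rightarrow> nat \<Rightarrow> nat \<Rightarrow> nat" where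
  "cycle_dist n a b = (let d = if a \<le> b then b - a else a - b in min d (n - d))"

lemma cycle_dist_self [simp]: "cycle_dist n a a = 0"
  by (simp add: cycle_dist_def)

lemma cycle_dist_eq_min_arcs:
  assumes "a < n" "b < n"
  shows "cycle_dist n a b = min ((b + n - a) mod n) ((a + n - b) mod n)"
proof (cases "a \<le> b")
  case True
  then have "(b + n - a) mod n = b - a" "(a + n - b) mod n = (if a = b then 0 else n - (b - a))"
    using assms by (auto simp: le_mod_geq)
  then show ?thesis using True by (auto simp: cycle_dist_def Let_def min_def)
next
  case False
  then have "(a + n - b) mod n = a - b" "(b + n - a) mod n = n - (a - b)"
    using assms by (auto simp: le_mod_geq)
  then show ?thesis using False by (auto simp: cycle_dist_def Let_def min_def)
qed

lemma cycle_dist_succ: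
  assumes "a < n" "b < n"
  shows "cycle_dist n ((a + 1) mod n) b \<le> cycle_dist n a b + 1"
    and "cycle_dist n a b \<le> cycle_dist n ((a + 1) mod n) b + 1"
  using assms by (cases "a + 1 = n"; auto simp: cycle_dist_def Let_def min_def)+

lemma cycle_dist_determined_by_0_1:
  assumes "3 \<le> n" "i < n" "j < n"
    and "cycle_dist n i 0 = cycle_dist n j 0" "cycle_dist n i 1 = cycle_dist n j 1"
  shows "i = j"
proof -
  have "j = i \<or> j = n - i"
    using assms(2-4) by (auto simp: cycle_dist_def Let_def min_def split: if_splits)
  then show ?thesis
    using assms(1,2,3,5) by (auto simp: cycle_dist_def Let_def min_def split: if_splits)
qed

lemma mod_reflect_succ:
  assumes "a < (n::nat)"
  shows "(n - a) mod n = ((n - (a + 1) mod n) mod n + 1) mod n"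
  using assms by (cases "a + 1 = n"; cases "a = 0"; simp add: Suc_diff_Suc)

lemma mod_reflect_involution: "a < (n::nat) \<Longrightarrow> (n - (n - a) mod n) mod n = a"
  by (cases "a = 0") auto

section \<open>Walks and distances in connected graphs\<close>

lemma walk_of_len_0_iff: "walk_of_len V E u v 0 \<longleftrightarrow> u = v \<and> u \<in> V"
  unfolding walk_of_len_def by (auto simp: length_Suc_conv)

lemma walk_of_len_Suc_iff:
  "walk_of_len V E u v (Suc m) \<longleftrightarrow> u \<in> V \<and> (\<exists>w. E u w \<and> walk_of_len V E w v m)"
proof
  assume "walk_of_len V E u v (Suc m)"
  then obtain ps where ps: "length ps = Suc (Suc m)" "hd ps = u" "last ps = v" "set ps \<subseteq> V"
      "\<forall>i < Suc m. E (ps ! i) (ps ! Suc i)"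
    unfolding walk_of_len_def by blast
  then obtain w qs where ps_eq: "ps = u # w # qs"
    by (auto simp: length_Suc_conv)
  have "walk_of_len V E w v m"
    unfolding walk_of_len_def
    using ps ps_eq by (intro exI[of _ "w # qs"]) auto
  moreover have "E u w" using ps(5)[rule_format, of 0] ps_eq by simp
  ultimately show "u \<in> V \<and> (\<exists>w. E u w \<and> walk_of_len V E w v m)"
    using ps(4) ps_eq by auto
next
  assume "u \<in> V \<and> (\<exists>w. E u w \<and> walk_of_len V E w v m)"
  then obtain w ps where "u \<in> V" "E u w" and ps: "length ps = Suc m" "hd ps = w" "last ps = v"
      "set ps \<subseteq> V" "\<forall>i < m. E (ps ! i) (ps ! Suc i)"
    unfolding walk_of_len_def by blast
  then obtain qs where ps_eq: "ps = w # qs" by (cases ps) auto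
  have "\<forall>i < Suc m. E ((u # ps) ! i) ((u # ps) ! Suc i)"
    using \<open>E u w\<close> ps(5) ps_eq by (auto simp: less_Suc_eq_0_disj)
  then show "walk_of_len V E u v (Suc m)"
    unfolding walk_of_len_def using ps ps_eq \<open>u \<in> V\<close> by (intro exI[of _ "u # ps"]) auto
qed

lemma walk_of_len_append:
  "walk_of_len V E u v a \<Longrightarrow> walk_of_len V E v w b \<Longrightarrow> walk_of_len V E u w (a + b)"
  by (induction a arbitrary: u) (auto simp: walk_of_len_0_iff walk_of_len_Suc_iff)

lemma walk_of_len_edge:
  "E u v \<Longrightarrow> u \<in> V \<Longrightarrow> v \<in> V \<Longrightarrow> walk_of_len V E u v 1"
  by (auto simp: walk_of_len_Suc_iff walk_of_len_0_iff)

lemma walk_of_len_in_V: "walk_of_len V E u v m \<Longrightarrow> u \<in> V \<and> v \<in> V"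
  by (induction m arbitrary: u) (force simp: walk_of_len_0_iff walk_of_len_Suc_iff)+

lemma walk_of_len_rev:
  assumes "\<And>x y. E x y \<Longrightarrow> E y x"
  shows "walk_of_len V E u v m \<Longrightarrow> walk_of_len V E v u m"
proof (induction m arbitrary: u)
  case 0
  then show ?case by (auto simp: walk_of_len_0_iff)
next
  case (Suc m)
  then obtain w where "E u w" "u \<in> V" "walk_of_len V E w v m"
    by (auto simp: walk_of_len_Suc_iff)
  moreover from this have "walk_of_len V E w u 1"
    by (meson assms walk_of_len_edge walk_of_len_in_V)
  ultimately show ?case using Suc.IH walk_of_len_append by fastforce
qed

lemma walk_of_len_map:
  assumes "\<And>x. x \<in> V \<Longrightarrow> f x \<in> V" and "\<And>x y. E x y \<Longrightarrow> E (f x) (f y)"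
  shows "walk_of_len V E u v m \<Longrightarrow> walk_of_len V E (f u) (f v) m"
  by (induction m arbitrary: u)
    (auto simp: walk_of_len_0_iff walk_of_len_Suc_iff assms(1), blast intro: assms(2))

locale connected_graph =
  fixes V :: "'a set" and E :: "'a \<Rightarrow> 'a \<Rightarrow> bool"
  assumes adj_sym: "E x y \<Longrightarrow> E y x"
    and adj_in_V: "E x y \<Longrightarrow> x \<in> V \<and> y \<in> V"
    and connected: "x \<in> V \<Longrightarrow> y \<in> V \<Longrightarrow> \<exists>m. walk_of_len V E x y m"
begin

abbreviation d :: "'a \<Rightarrow> 'a \<Rightarrow> nat" where "d \<equiv> gdist V E"

lemma gdist_le: "walk_of_len V E u v m \<Longrightarrow> d u v \<le> m"
  unfolding gdist_def by (rule Least_le)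

lemma walk_of_len_gdist: "u \<in> V \<Longrightarrow> v \<in> V \<Longrightarrow> walk_of_len V E u v (d u v)"
  unfolding gdist_def using connected by (blast intro: LeastI)

lemma gdist_self [simp]: "u \<in> V \<Longrightarrow> d u u = 0"
  using gdist_le[of u u 0] by (simp add: walk_of_len_0_iff)

lemma gdist_eq_0_iff: "u \<in> V \<Longrightarrow> v \<in> V \<Longrightarrow> d u v = 0 \<longleftrightarrow> u = v"
  using walk_of_len_gdist[of u v] by (auto simp: walk_of_len_0_iff)

lemma gdist_commute: "u \<in> V \<Longrightarrow> v \<in> V \<Longrightarrow> d u v = d v u"
  using gdist_le[OF walk_of_len_rev[OF adj_sym walk_of_len_gdist]] by (simp add: le_antisym)

lemma gdist_triangle: "u \<in> V \<Longrightarrow> v \<in> V \<Longrightarrow> w \<in> V \<Longrightarrow> d u w \<le> d u v + d v w"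
  using gdist_le[OF walk_of_len_append[OF walk_of_len_gdist walk_of_len_gdist]] .

lemma gdist_edge: "E u v \<Longrightarrow> d u v \<le> 1"
  using gdist_le[OF walk_of_len_edge] adj_in_V by blast

lemma le_gdist_if_lipschitz:
  assumes lip: "\<And>x y. E x y \<Longrightarrow> f x \<le> f y + 1" and "f r = 0" "v \<in> V" "r \<in> V"
  shows "f v \<le> d v r"
proof -
  have "f u \<le> m" if "walk_of_len V E u r m" for u m
    using that
  proof (induction m arbitrary: u)
    case 0
    then show ?case using \<open>f r = 0\<close> by (simp add: walk_of_len_0_iff)
  next
    case (Suc m)
    then obtain w where "E u w" "walk_of_len V E w r m" by (auto simp: walk_of_len_Suc_iff)
    then show ?case using Suc.IH lip by fastforce
  qed
  then show ?thesis using walk_of_len_gdist assms(3,4) by blast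
qed

lemma gdist_through_cut_vertex:
  assumes cut: "\<And>a b. E a b \<Longrightarrow> a \<in> S \<Longrightarrow> b \<notin> S \<Longrightarrow> a = g" and "g \<in> V"
    and x: "x \<in> V" "x \<in> S" and y: "y \<in> V" "y \<notin> S"
  shows "d x y = d x g + d g y"
proof -
  have "d x g + d g y \<le> m" if "walk_of_len V E x y m" "x \<in> S" for x m
    using that
  proof (induction m arbitrary: x)
    case 0
    then show ?case using y(2) by (simp add: walk_of_len_0_iff)
  next
    case (Suc m)
    then obtain w where w: "E x w" "x \<in> V" "walk_of_len V E w y m"
      by (auto simp: walk_of_len_Suc_iff)
    show ?case
    proof (cases "w \<in> S")
      case True
      have "d x g \<le> d x w + d w g"
        using gdist_triangle adj_in_V[OF w(1)] \<open>g \<in> V\<close> by blast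
      then show ?thesis using Suc.IH[OF w(3) True] gdist_edge[OF w(1)] by linarith
    next
      case False
      then have "x = g" using cut w(1) Suc.prems(2) by blast
      then show ?thesis using gdist_le[OF Suc.prems(1)] \<open>g \<in> V\<close> by simp
    qed
  qed
  then have "d x g + d g y \<le> d x y" using walk_of_len_gdist x y by blast
  moreover have "d x y \<le> d x g + d g y" using gdist_triangle x y \<open>g \<in> V\<close> by blast
  ultimately show ?thesis by simp
qed

lemma gdist_across_bridge:
  assumes bridge: "\<And>a b. E a b \<Longrightarrow> a \<in> S \<Longrightarrow> b \<notin> S \<Longrightarrow> a = g \<and> b = p"
    and "E g p" "g \<in> S" "p \<notin> S"
    and x: "x \<in> V" "x \<in> S" and y: "y \<in> V" "y \<notin> S"
  shows "d x y = d x g + 1 + d p y"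
proof -
  have V: "g \<in> V" "p \<in> V" using adj_in_V[OF \<open>E g p\<close>] by auto
  have "g \<noteq> p" using \<open>g \<in> S\<close> \<open>p \<notin> S\<close> by blast
  then have "d g p \<noteq> 0" using gdist_eq_0_iff[OF V] by simp
  then have "d g p = 1" using gdist_edge[OF \<open>E g p\<close>] by linarith
  have cut: "a = g" if "E a b" "a \<in> S" "b \<notin> S" for a b
    using bridge[OF that] by blast
  have cut_back: "a = p" if "E a b" "a \<in> V - S" "b \<notin> V - S" for a b
  proof -
    have "b \<in> S" using that(3) adj_in_V[OF that(1)] by blast
    then show "a = p" using bridge[OF adj_sym[OF that(1)]] that(2) by blast
  qed
  have "d x y = d x g + d g y"
    using gdist_through_cut_vertex[of S g, OF cut V(1) x y] .
  moreover have "d y g = d y p + d p g"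
    using gdist_through_cut_vertex[of "V - S" p, OF cut_back V(2) y(1) _ V(1)] y \<open>g \<in> S\<close>
    by simp
  ultimately show ?thesis
    using gdist_commute[OF y(1) V(1)] gdist_commute[OF y(1) V(2)] gdist_commute[OF V]
      \<open>d g p = 1\<close> by simp
qed

text \<open>If \<open>d u r = d v r\<close> then \<open>d u p < d v g\<close>,
  and if \<open>d u r' = d v r'\<close> then \<open>d v g < d u p\<close>.\<close>

lemma bridge_resolves:
  assumes bridge: "\<And>a b. E a b \<Longrightarrow> a \<in> S \<Longrightarrow> b \<notin> S \<Longrightarrow> a = g \<and> b = p"
    and "E g p" "g \<in> S" "p \<notin> S"
    and u: "u \<in> V" "u \<notin> S" and v: "v \<in> V" "v \<in> S"
    and r: "r \<in> V" "r \<in> S" and r': "r' \<in> V" "r' \<notin> S"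
  shows "d u r \<noteq> d v r \<or> d u r' \<noteq> d v r'"
proof -
  have V: "g \<in> V" "p \<in> V" using adj_in_V[OF \<open>E g p\<close>] by auto
  have "d u r = d u p + 1 + d g r"
    using gdist_across_bridge[OF assms(1-4) r u] gdist_commute u r V by simp
  moreover have "d v r \<le> d v g + d g r" using gdist_triangle v r V by blast
  moreover have "d v r' = d v g + 1 + d p r'"
    using gdist_across_bridge[OF assms(1-4) v r'] .
  moreover have "d u r' \<le> d u p + d p r'" using gdist_triangle u r' V by blast
  ultimately show ?thesis by linarith
qed

lemma gdist_involution:
  assumes "\<And>x. x \<in> V \<Longrightarrow> f x \<in> V" and "\<And>x y. E x y \<Longrightarrow> E (f x) (f y)"
    and "\<And>x. x \<in> V \<Longrightarrow> f (f x) = x" and "u \<in> V" "v \<in> V"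
  shows "d (f u) (f v) = d u v"
proof -
  have le: "d (f x) (f y) \<le> d x y" if "x \<in> V" "y \<in> V" for x y
    using gdist_le[OF walk_of_len_map[OF assms(1,2) walk_of_len_gdist[OF that]]] .
  show ?thesis
    using le[OF assms(4,5)] le[OF assms(1)[OF assms(4)] assms(1)[OF assms(5)]] assms(3-5) by simp
qed

end

lemma metric_dim_eqI:
  assumes "finite R" "resolving V E R"
    and "\<And>R'. finite R' \<Longrightarrow> resolving V E R' \<Longrightarrow> card R \<le> card R'"
  shows "metric_dim V E = card R"
  unfolding metric_dim_def by (rule Least_equality) (use assms in auto)

section \<open>The layer cycle graph\<close>

text \<open>The subtree of a cycle \<open>zs\<close> consists of that cycle and all cycles hanging below it;
  the leaf cycles are the cycles of the last layer \<open>U\<^sub>k\<close>.\<close>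

definition subtree :: "nat \<Rightarrow> nat \<Rightarrow> nat list \<Rightarrow> (nat list \<times> nat) set" where
  "subtree n k zs = {w \<in> lcg_V n k. prefix zs (fst w)}"

definition leaf_cycles :: "nat \<Rightarrow> nat \<Rightarrow> nat list set" where
  "leaf_cycles n k = {xs. (xs, 0) \<in> lcg_V n k \<and> length xs = k - 1}"

definition lcg_landmarks :: "nat \<Rightarrow> nat \<Rightarrow> (nat list \<times> nat) set" where
  "lcg_landmarks n k = (\<lambda>xs. (xs, 1)) ` leaf_cycles n k"

definition reflect_cycle :: "nat \<Rightarrow> nat list \<Rightarrow> nat list \<times> nat \<Rightarrow> nat list \<times> nat" where
  "reflect_cycle n xs w = (if fst w = xs then (xs, (n - snd w) mod n) else w)"

locale lcg =
  fixes n k :: nat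
  assumes n_ge_3: "3 \<le> n" and k_ge_2: "2 \<le> k"
begin

lemma lcg_V_change_pos: "(xs, i) \<in> lcg_V n k \<Longrightarrow> j < n \<Longrightarrow> (xs, j) \<in> lcg_V n k"
  by (simp add: lcg_V_def)

lemma lcg_V_parent:
  assumes "(ys @ [a], i) \<in> lcg_V n k"
  shows "(ys, a) \<in> lcg_V n k" and "ys \<noteq> [] \<Longrightarrow> a \<noteq> 0"
  using assms n_ge_3 by (cases ys; simp add: lcg_V_def)+

lemma lcg_E_cycle: "(xs, i) \<in> lcg_V n k \<Longrightarrow> lcg_E n k (xs, i) (xs, (i + 1) mod n)"
  using n_ge_3 by (simp add: lcg_E_def lcg_adj0_def lcg_V_change_pos)

lemma lcg_E_parent: "(ys @ [a], i) \<in> lcg_V n k \<Longrightarrow> lcg_E n k (ys, a) (ys @ [a], 0)"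
  using lcg_V_parent[of ys a i] lcg_V_change_pos[of "ys @ [a]" i 0] n_ge_3
  by (auto simp: lcg_E_def lcg_adj0_def)

lemma lcg_E_same_cycle:
  "lcg_E n k (xs, i) (xs, j) \<Longrightarrow> j = (i + 1) mod n \<or> i = (j + 1) mod n"
  by (auto simp: lcg_E_def lcg_adj0_def)

lemma walk_of_len_lcg_E: "lcg_E n k u v \<Longrightarrow> walk_of_len (lcg_V n k) (lcg_E n k) u v 1"
  by (rule walk_of_len_edge) (auto simp: lcg_E_def)

lemma walk_along_cycle:
  "(xs, i) \<in> lcg_V n k \<Longrightarrow> walk_of_len (lcg_V n k) (lcg_E n k) (xs, i) (xs, (i + m) mod n) m"
proof (induction m)
  case 0
  then show ?case using n_ge_3 by (simp add: walk_of_len_0_iff lcg_V_def)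
next
  case (Suc m)
  have "(xs, (i + m) mod n) \<in> lcg_V n k" using Suc.prems lcg_V_change_pos n_ge_3 by simp
  from lcg_E_cycle[OF this] have "lcg_E n k (xs, (i + m) mod n) (xs, (i + Suc m) mod n)"
    by (simp add: mod_Suc_eq)
  then have "walk_of_len (lcg_V n k) (lcg_E n k) (xs, (i + m) mod n) (xs, (i + Suc m) mod n) 1"
    by (rule walk_of_len_lcg_E)
  from walk_of_len_append[OF Suc.IH[OF Suc.prems] this] show ?case by simp
qed

lemma walk_to_root:
  "(xs, i) \<in> lcg_V n k \<Longrightarrow> \<exists>m. walk_of_len (lcg_V n k) (lcg_E n k) (xs, i) ([], 0) m"
proof (induction xs arbitrary: i rule: rev_induct)
  case Nil
  then show ?case using walk_along_cycle[OF Nil, of "n - i"] by (auto simp: lcg_V_def)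
next
  case (snoc a ys)
  have "walk_of_len (lcg_V n k) (lcg_E n k) (ys @ [a], i) (ys @ [a], 0) (n - i)"
    using walk_along_cycle[OF snoc.prems, of "n - i"] snoc.prems by (simp add: lcg_V_def)
  moreover have "lcg_E n k (ys @ [a], 0) (ys, a)"
    using lcg_E_parent[OF snoc.prems] by (auto simp: lcg_E_def)
  then have "walk_of_len (lcg_V n k) (lcg_E n k) (ys @ [a], 0) (ys, a) 1"
    by (rule walk_of_len_lcg_E)
  moreover obtain m where "walk_of_len (lcg_V n k) (lcg_E n k) (ys, a) ([], 0) m"
    using snoc.IH lcg_V_parent(1)[OF snoc.prems] by blast
  ultimately show ?case by (meson walk_of_len_append)
qed

sublocale connected_graph "lcg_V n k" "lcg_E n k"
proof
  show sym: "lcg_E n k x y \<Longrightarrow> lcg_E n k y x" for x y by (auto simp: lcg_E_def)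
  show "lcg_E n k x y \<Longrightarrow> x \<in> lcg_V n k \<and> y \<in> lcg_V n k" for x y by (simp add: lcg_E_def)
  fix x y assume "x \<in> lcg_V n k" "y \<in> lcg_V n k"
  then obtain a b where "walk_of_len (lcg_V n k) (lcg_E n k) x ([], 0) a"
      "walk_of_len (lcg_V n k) (lcg_E n k) y ([], 0) b"
    using walk_to_root by (metis prod.collapse)
  then show "\<exists>m. walk_of_len (lcg_V n k) (lcg_E n k) x y m"
    using walk_of_len_append[OF _ walk_of_len_rev[of "lcg_E n k", OF sym]] by blast
qed

lemma subtree_bridge:
  assumes "(zs, i) \<in> lcg_V n k" "zs \<noteq> []"
    and "lcg_E n k a b" "a \<in> subtree n k zs" "b \<notin> subtree n k zs"
  shows "a = (zs, 0) \<and> b = (butlast zs, last zs)"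
proof -
  obtain as x bs y where ab: "a = (as, x)" "b = (bs, y)" by fastforce
  have "prefix zs as" "\<not> prefix zs bs"
    using assms(3-5) ab by (auto simp: subtree_def lcg_E_def)
  moreover have "lcg_adj0 n a b \<or> lcg_adj0 n b a" using assms(3) by (simp add: lcg_E_def)
  ultimately have "as = bs @ [y]" "x = 0" using ab by (auto simp: lcg_adj0_def)
  with \<open>prefix zs as\<close> \<open>\<not> prefix zs bs\<close> have "zs = bs @ [y]" by simp
  then show ?thesis using ab \<open>as = bs @ [y]\<close> \<open>x = 0\<close> by simp
qed

lemma subtree_head:
  assumes "(zs, i) \<in> lcg_V n k"
  shows "(zs, 0) \<in> subtree n k zs"
  using lcg_V_change_pos[OF assms, of 0] n_ge_3 by (simp add: subtree_def)

lemma subtree_parent: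
  assumes "(zs, i) \<in> lcg_V n k" "zs \<noteq> []"
  shows "(butlast zs, last zs) \<in> lcg_V n k - subtree n k zs"
    and "lcg_E n k (zs, 0) (butlast zs, last zs)"
proof -
  have zs: "zs = butlast zs @ [last zs]" using assms(2) by simp
  then have "(butlast zs, last zs) \<in> lcg_V n k" using lcg_V_parent(1) assms(1) by metis
  moreover have "\<not> prefix zs (butlast zs)"
    using prefix_length_le[of zs "butlast zs"] assms(2) by (cases zs) auto
  ultimately show "(butlast zs, last zs) \<in> lcg_V n k - subtree n k zs" by (simp add: subtree_def)
  show "lcg_E n k (zs, 0) (butlast zs, last zs)"
    using lcg_E_parent[of "butlast zs" "last zs" i] zs assms(1) adj_sym by metis
qed

lemma gdist_leave_subtree:
  assumes "(zs, i) \<in> lcg_V n k" "zs \<noteq> []"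
    and "u \<in> subtree n k zs" "r \<in> lcg_V n k - subtree n k zs"
  shows "d u r = d u (zs, 0) + d (zs, 0) r"
  using gdist_through_cut_vertex[of "subtree n k zs" "(zs, 0)" u r] subtree_bridge[OF assms(1,2)]
    subtree_head[OF assms(1)] assms(3,4) by (auto simp: subtree_def)

lemma gdist_enter_subtree:
  assumes "(xs @ [a], 0) \<in> lcg_V n k"
    and "u \<in> lcg_V n k - subtree n k (xs @ [a])" "r \<in> subtree n k (xs @ [a])"
  shows "d u r = d u (xs, a) + d (xs, a) r"
proof (rule gdist_through_cut_vertex[of "lcg_V n k - subtree n k (xs @ [a])"])
  fix b c assume "lcg_E n k b c" "b \<in> lcg_V n k - subtree n k (xs @ [a])"
    "c \<notin> lcg_V n k - subtree n k (xs @ [a])"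
  then show "b = (xs, a)"
    using subtree_bridge[OF assms(1) _ adj_sym] adj_in_V by fastforce
qed (use assms lcg_V_parent(1)[OF assms(1)] in \<open>auto simp: subtree_def\<close>)

lemma landmark_in_subtree:
  assumes "(zs, i) \<in> lcg_V n k"
  shows "\<exists>r \<in> lcg_landmarks n k. r \<in> subtree n k zs"
proof -
  define ys where "ys = zs @ replicate (k - 1 - length zs) 1"
  have "ys \<in> leaf_cycles n k"
    using assms n_ge_3 unfolding ys_def leaf_cycles_def lcg_V_def by (cases zs) auto
  moreover have "(ys, 1) \<in> subtree n k zs"
    using calculation n_ge_3 unfolding ys_def leaf_cycles_def subtree_def lcg_V_def by auto
  ultimately show ?thesis unfolding lcg_landmarks_def by blast
qed

lemma landmark_outside_subtree:
  assumes "zs \<noteq> []"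
  shows "\<exists>r \<in> lcg_landmarks n k. r \<notin> subtree n k zs"
proof -
  define ys where "ys = (if hd zs = 0 then 1 else 0) # replicate (k - 2) (1::nat)"
  have "ys \<in> leaf_cycles n k"
    using n_ge_3 k_ge_2 unfolding ys_def leaf_cycles_def lcg_V_def by auto
  moreover have "(ys, 1) \<notin> subtree n k zs"
    using assms unfolding ys_def subtree_def by (cases zs) auto
  ultimately show ?thesis unfolding lcg_landmarks_def by blast
qed

lemma lcg_landmarks_subset_V: "lcg_landmarks n k \<subseteq> lcg_V n k"
  using n_ge_3 lcg_V_change_pos by (auto simp: lcg_landmarks_def leaf_cycles_def)

lemma landmarks_resolve_subtree:
  assumes "(zs, i) \<in> lcg_V n k" "zs \<noteq> []"
    and u: "u \<in> lcg_V n k - subtree n k zs" and v: "v \<in> subtree n k zs"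
  shows "\<exists>r \<in> lcg_landmarks n k. d u r \<noteq> d v r"
proof -
  obtain r where r: "r \<in> lcg_landmarks n k" "r \<in> subtree n k zs"
    using landmark_in_subtree[OF assms(1)] by blast
  obtain r' where r': "r' \<in> lcg_landmarks n k" "r' \<notin> subtree n k zs"
    using landmark_outside_subtree[OF assms(2)] by blast
  have "d u r \<noteq> d v r \<or> d u r' \<noteq> d v r'"
  proof (rule bridge_resolves[of "subtree n k zs" "(zs, 0)" "(butlast zs, last zs)"])
    show "a = (zs, 0) \<and> b = (butlast zs, last zs)"
      if "lcg_E n k a b" "a \<in> subtree n k zs" "b \<notin> subtree n k zs" for a b
      using subtree_bridge[OF assms(1,2) that] .
  qed (use subtree_parent[OF assms(1,2)] subtree_head[OF assms(1)] u v r r'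
      lcg_landmarks_subset_V in \<open>auto simp: subtree_def\<close>)
  then show ?thesis using r(1) r'(1) by blast
qed

lemma leaf_cycle_nonempty: "xs \<in> leaf_cycles n k \<Longrightarrow> xs \<noteq> []"
  using k_ge_2 by (auto simp: leaf_cycles_def)

lemma subtree_leaf_cycle:
  "xs \<in> leaf_cycles n k \<Longrightarrow> subtree n k xs = {w \<in> lcg_V n k. fst w = xs}"
  by (auto simp: subtree_def leaf_cycles_def lcg_V_def prefix_def)

lemma edge_leaving_leaf_cycle:
  assumes "xs \<in> leaf_cycles n k" "lcg_E n k x y" "fst x = xs" "fst y \<noteq> xs"
  shows "x = (xs, 0)"
  using subtree_bridge[of xs 0 x y] assms subtree_leaf_cycle[OF assms(1)] leaf_cycle_nonempty
  by (auto simp: leaf_cycles_def lcg_E_def)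

lemma gdist_leaf_cycle:
  assumes xs: "xs \<in> leaf_cycles n k" and "a < n" "t < n"
  shows "d (xs, a) (xs, t) = cycle_dist n a t"
proof (rule antisym)
  have V: "(xs, a) \<in> lcg_V n k" "(xs, t) \<in> lcg_V n k"
    using xs assms(2,3) lcg_V_change_pos by (auto simp: leaf_cycles_def)
  have "(a + (t + n - a) mod n) mod n = t" "(t + (a + n - t) mod n) mod n = a"
    using assms(2,3) by (simp_all add: mod_add_right_eq)
  then have "d (xs, a) (xs, t) \<le> (t + n - a) mod n" "d (xs, t) (xs, a) \<le> (a + n - t) mod n"
    using gdist_le[OF walk_along_cycle] V by metis+
  then show "d (xs, a) (xs, t) \<le> cycle_dist n a t"
    using cycle_dist_eq_min_arcs[OF assms(2,3)] gdist_commute[OF V] by simp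
  txt \<open>Lower bound: the cycle distance to \<open>t\<close>, with every vertex off the cycle placed one
    step beyond the head, changes by at most 1 along an edge.\<close>
  define f where "f w = (if fst w = xs then cycle_dist n (snd w) t else cycle_dist n 0 t + 1)" for w
  have "f x \<le> f y + 1" if e: "lcg_E n k x y" for x y
  proof (cases "fst x = xs \<and> fst y = xs")
    case True
    then obtain i j where ij: "x = (xs, i)" "y = (xs, j)" "i < n" "j < n"
      using e by (cases x, cases y) (auto simp: lcg_E_def lcg_V_def)
    then have "j = (i + 1) mod n \<or> i = (j + 1) mod n" using lcg_E_same_cycle e by blast
    then show ?thesis using cycle_dist_succ ij assms(3) unfolding f_def by auto
  next
    case False
    then show ?thesis
      using edge_leaving_leaf_cycle[OF xs e] edge_leaving_leaf_cycle[OF xs adj_sym[OF e]]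
      unfolding f_def by (cases "fst x = xs"; cases "fst y = xs") auto
  qed
  from le_gdist_if_lipschitz[of f "(xs, t)" "(xs, a)", OF this _ V]
  show "cycle_dist n a t \<le> d (xs, a) (xs, t)"
    unfolding f_def by simp
qed

lemma landmarks_determine_dist_to_head:
  assumes V: "(xs, i) \<in> lcg_V n k" "(xs, j) \<in> lcg_V n k" and "xs \<noteq> []"
    and eq: "\<forall>r \<in> lcg_landmarks n k. d (xs, i) r = d (xs, j) r"
  shows "d (xs, i) (xs, 0) = d (xs, j) (xs, 0)"
proof -
  obtain r where r: "r \<in> lcg_landmarks n k" "r \<notin> subtree n k xs"
    using landmark_outside_subtree[OF \<open>xs \<noteq> []\<close>] by blast
  then have "r \<in> lcg_V n k - subtree n k xs" using lcg_landmarks_subset_V by blast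
  then have "d (xs, l) r = d (xs, l) (xs, 0) + d (xs, 0) r" if "(xs, l) \<in> lcg_V n k" for l
    using gdist_leave_subtree[OF that \<open>xs \<noteq> []\<close>] that by (simp add: subtree_def)
  then show ?thesis using eq r(1) V by fastforce
qed

lemma landmarks_resolve_cycle:
  assumes V: "(xs, i) \<in> lcg_V n k" "(xs, j) \<in> lcg_V n k"
    and eq: "\<forall>r \<in> lcg_landmarks n k. d (xs, i) r = d (xs, j) r"
  shows "i = j"
proof -
  have "i < n" "j < n" "length xs \<le> k - 1" using V by (auto simp: lcg_V_def)
  have "(xs @ [i], 0) \<in> lcg_V n k" if "length xs \<noteq> k - 1" "xs = [] \<or> i \<noteq> 0"
    using V(1) that n_ge_3 k_ge_2 by (cases xs) (auto simp: lcg_V_def)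
  then consider "length xs = k - 1" | "xs \<noteq> []" "i = 0" | "(xs @ [i], 0) \<in> lcg_V n k"
    by blast
  then show ?thesis
  proof cases
    case 1
    then have leaf: "xs \<in> leaf_cycles n k"
      using V(1) n_ge_3 lcg_V_change_pos by (auto simp: leaf_cycles_def)
    then have "(xs, 1) \<in> lcg_landmarks n k" by (simp add: lcg_landmarks_def)
    then have "d (xs, i) (xs, 1) = d (xs, j) (xs, 1)" using eq by blast
    then have "cycle_dist n i 1 = cycle_dist n j 1"
      using gdist_leaf_cycle[OF leaf] \<open>i < n\<close> \<open>j < n\<close> n_ge_3 by simp
    moreover have "cycle_dist n i 0 = cycle_dist n j 0"
      using landmarks_determine_dist_to_head[OF V leaf_cycle_nonempty[OF leaf] eq]
        gdist_leaf_cycle[OF leaf] \<open>i < n\<close> \<open>j < n\<close> n_ge_3 by simp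
    ultimately show ?thesis
      using cycle_dist_determined_by_0_1 n_ge_3 \<open>i < n\<close> \<open>j < n\<close> by blast
  next
    case 2
    then have "d (xs, j) (xs, 0) = 0"
      using landmarks_determine_dist_to_head[OF V _ eq] V(1) by simp
    then show ?thesis using gdist_eq_0_iff[of "(xs, j)" "(xs, 0)"] V 2(2) by simp
  next
    case 3
    obtain r where r: "r \<in> lcg_landmarks n k" "r \<in> subtree n k (xs @ [i])"
      using landmark_in_subtree[OF 3] by blast
    have through: "d (xs, l) r = d (xs, l) (xs, i) + d (xs, i) r" if "(xs, l) \<in> lcg_V n k" for l
      using gdist_enter_subtree[OF 3 _ r(2)] that by (simp add: subtree_def)
    have "d (xs, i) r = d (xs, j) r" using eq r(1) by blast
    then have "d (xs, j) (xs, i) = 0" using through[OF V(1)] through[OF V(2)] V(1) by simp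
    then show ?thesis using gdist_eq_0_iff V by blast
  qed
qed

lemma resolving_landmarks: "resolving (lcg_V n k) (lcg_E n k) (lcg_landmarks n k)"
  unfolding resolving_def
proof (intro conjI ballI impI lcg_landmarks_subset_V)
  fix u v assume V: "u \<in> lcg_V n k" "v \<in> lcg_V n k"
    and eq: "\<forall>r \<in> lcg_landmarks n k. d u r = d v r"
  obtain xs i ys j where uv: "u = (xs, i)" "v = (ys, j)" by fastforce
  consider "xs = ys" | "\<not> prefix ys xs" | "\<not> prefix xs ys"
    using prefix_order.antisym by blast
  then show "u = v"
  proof cases
    case 1
    then show ?thesis using landmarks_resolve_cycle V eq uv by blast
  next
    case 2
    then have "ys \<noteq> []" by auto
    then show ?thesis
      using landmarks_resolve_subtree[of ys j u v] 2 V eq uv by (auto simp: subtree_def)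
  next
    case 3
    then have "xs \<noteq> []" by auto
    then show ?thesis
      using landmarks_resolve_subtree[of xs i v u] 3 V eq uv by (auto simp: subtree_def)
  qed
qed

lemma reflect_cycle_in_V: "w \<in> lcg_V n k \<Longrightarrow> reflect_cycle n xs w \<in> lcg_V n k"
  using n_ge_3 by (cases w) (auto simp: reflect_cycle_def intro: lcg_V_change_pos)

lemma reflect_cycle_involution: "w \<in> lcg_V n k \<Longrightarrow> reflect_cycle n xs (reflect_cycle n xs w) = w"
  using mod_reflect_involution by (cases w) (simp add: reflect_cycle_def lcg_V_def)

lemma lcg_E_reflect_leaf_cycle:
  assumes xs: "xs \<in> leaf_cycles n k" and e: "lcg_E n k x y"
  shows "lcg_E n k (reflect_cycle n xs x) (reflect_cycle n xs y)"
proof (cases "fst x = xs \<and> fst y = xs")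
  case True
  then obtain i j where ij: "x = (xs, i)" "y = (xs, j)" "i < n" "j < n"
    using e by (cases x, cases y) (auto simp: lcg_E_def lcg_V_def)
  then have "j = (i + 1) mod n \<or> i = (j + 1) mod n" using lcg_E_same_cycle e by blast
  then have "(n - i) mod n = ((n - j) mod n + 1) mod n \<or> (n - j) mod n = ((n - i) mod n + 1) mod n"
    using mod_reflect_succ[OF ij(3)] mod_reflect_succ[OF ij(4)] by blast
  moreover have "reflect_cycle n xs x = (xs, (n - i) mod n)" "reflect_cycle n xs y = (xs, (n - j) mod n)"
    using ij by (simp_all add: reflect_cycle_def)
  moreover have "reflect_cycle n xs x \<in> lcg_V n k" "reflect_cycle n xs y \<in> lcg_V n k"
    using reflect_cycle_in_V e by (auto simp: lcg_E_def)
  ultimately show ?thesis unfolding lcg_E_def lcg_adj0_def by auto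
next
  case False
  then have "x = (xs, 0) \<or> y = (xs, 0) \<or> (fst x \<noteq> xs \<and> fst y \<noteq> xs)"
    using edge_leaving_leaf_cycle[OF xs e] edge_leaving_leaf_cycle[OF xs adj_sym[OF e]] by blast
  then show ?thesis using False e by (auto simp: reflect_cycle_def)
qed

lemma resolving_meets_leaf_cycle:
  assumes R: "resolving (lcg_V n k) (lcg_E n k) R" and xs: "xs \<in> leaf_cycles n k"
  shows "\<exists>r \<in> R. fst r = xs \<and> snd r \<noteq> 0"
proof (rule ccontr)
  assume "\<not> ?thesis"
  then have fixed: "reflect_cycle n xs r = r" if "r \<in> R" for r
    using that by (cases r) (auto simp: reflect_cycle_def)
  have V: "(xs, 1) \<in> lcg_V n k" "(xs, n - 1) \<in> lcg_V n k"
    using xs n_ge_3 lcg_V_change_pos by (auto simp: leaf_cycles_def)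
  have "d (xs, 1) r = d (xs, n - 1) r" if "r \<in> R" for r
  proof -
    have "r \<in> lcg_V n k" using R that by (auto simp: resolving_def)
    then have "d (reflect_cycle n xs (xs, 1)) (reflect_cycle n xs r) = d (xs, 1) r"
      using gdist_involution reflect_cycle_in_V lcg_E_reflect_leaf_cycle[OF xs]
        reflect_cycle_involution V(1) by blast
    then show ?thesis using fixed[OF that] n_ge_3 by (simp add: reflect_cycle_def)
  qed
  then have "(xs, 1) = (xs, n - 1)" using R V unfolding resolving_def by blast
  then show False using n_ge_3 by simp
qed

lemma card_leaf_cycles_le_resolving:
  assumes "finite R" "resolving (lcg_V n k) (lcg_E n k) R"
  shows "card (leaf_cycles n k) \<le> card R"
proof -
  have "leaf_cycles n k \<subseteq> fst ` R" using resolving_meets_leaf_cycle[OF assms(2)] by force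
  then have "card (leaf_cycles n k) \<le> card (fst ` R)" using assms(1) by (simp add: card_mono)
  also have "\<dots> \<le> card R" using assms(1) by (rule card_image_le)
  finally show ?thesis .
qed

lemma leaf_cycles_eq:
  "leaf_cycles n k = (\<lambda>(a, ys). a # ys) ` ({..<n} \<times> {ys. set ys \<subseteq> {1..<n} \<and> length ys = k - 2})"
proof -
  have "xs \<in> leaf_cycles n k" if "a < n" "set ys \<subseteq> {1..<n}" "length ys = k - 2" "xs = a # ys"
    for xs a ys
    using that n_ge_3 k_ge_2 by (auto simp: leaf_cycles_def lcg_V_def)
  moreover have "\<exists>a ys. xs = a # ys \<and> a < n \<and> set ys \<subseteq> {1..<n} \<and> length ys = k - 2"
    if "xs \<in> leaf_cycles n k" for xs
    using that k_ge_2 by (cases xs) (auto simp: leaf_cycles_def lcg_V_def)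
  ultimately show ?thesis by fast
qed

lemma card_leaf_cycles: "finite (leaf_cycles n k)" "card (leaf_cycles n k) = n * (n - 1) ^ (k - 2)"
proof -
  let ?B = "{ys. set ys \<subseteq> {1..<n} \<and> length ys = k - 2}"
  have "inj_on (\<lambda>(a, ys). a # ys) ({..<n} \<times> ?B)" by (auto simp: inj_on_def)
  then have "card (leaf_cycles n k) = card ({..<n} \<times> ?B)"
    unfolding leaf_cycles_eq by (rule card_image)
  also have "\<dots> = n * (n - 1) ^ (k - 2)"
    using card_lists_length_eq[of "{1..<n}"] by (simp add: card_cartesian_product)
  finally show "card (leaf_cycles n k) = n * (n - 1) ^ (k - 2)" .
  show "finite (leaf_cycles n k)"
    unfolding leaf_cycles_eq using finite_lists_length_eq[of "{1..<n}"] by simp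
qed

end

theorem theorem3:
  fixes n k :: nat
  assumes "n \<ge> 3" and "k \<ge> 2"
  shows "metric_dim (lcg_V n k) (lcg_E n k) = n * (n - 1) ^ (k - 2)"
proof -
  interpret lcg n k using assms by unfold_locales
  have "card (lcg_landmarks n k) = card (leaf_cycles n k)"
    unfolding lcg_landmarks_def by (rule card_image) (simp add: inj_on_def)
  moreover have "finite (lcg_landmarks n k)"
    unfolding lcg_landmarks_def using card_leaf_cycles(1) by simp
  ultimately have "metric_dim (lcg_V n k) (lcg_E n k) = card (leaf_cycles n k)"
    using metric_dim_eqI[OF _ resolving_landmarks] card_leaf_cycles_le_resolving by simp
  then show ?thesis using card_leaf_cycles(2) by simp
qed

end
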